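(* The simplicial complex $\Sigma_D^q$ is shellable.
   Context: $D$ is a finite directed multigraph without loops on vertex set $V$ with arc set $\mathbb E$ (arc $e$ has head $e_+$, tail $e_-$), and $q\in V$ is such that every vertex is reachable from $q$ by a directed path. $S=k[y_e:e\in\mathbb E]$ over a field $k$. $\mathcal C_D^q\subseteq S$ is generated by $\prod_{e\in\mathbb E:\,e_+\in A,\,e_-\notin A}y_e$ for all nonempty $A\subseteq V\setminus\{q\}$, and $\Sigma_D^q$ is the simplicial complex on the vertex set $\{y_e:e\in\mathbb E\}$ whose Stanley–Reisner ideal is $\mathcal C_D^q$. *)

theory Defs
  imports Main
begin

definition loopless_multidigraph ::
  "'v set \<Rightarrow> 'e set \<Rightarrow> ('e \<Rightarrow> 'v) \<Rightarrow> ('e \<Rightarrow> 'v) \<Rightarrow> bool" where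
  "loopless_multidigraph V E hd_of tl_of \<longleftrightarrow>
     finite V \<and> finite E \<and>
     (\<forall>e\<in>E. hd_of e \<in> V \<and> tl_of e \<in> V \<and> hd_of e \<noteq> tl_of e)"

definition arc_rel :: "'e set \<Rightarrow> ('e \<Rightarrow> 'v) \<Rightarrow> ('e \<Rightarrow> 'v) \<Rightarrow> ('v \<times> 'v) set" where
  "arc_rel E hd_of tl_of = {(tl_of e, hd_of e) | e. e \<in> E}"

definition reachable :: "'e set \<Rightarrow> ('e \<Rightarrow> 'v) \<Rightarrow> ('e \<Rightarrow> 'v) \<Rightarrow> 'v \<Rightarrow> 'v \<Rightarrow> bool" where
  "reachable E hd_of tl_of u w \<longleftrightarrow> (u, w) \<in> (arc_rel E hd_of tl_of)\<^sup>*"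

text \<open>Support of the generator of the cut ideal for A: arcs entering A.\<close>
definition in_cut :: "'e set \<Rightarrow> ('e \<Rightarrow> 'v) \<Rightarrow> ('e \<Rightarrow> 'v) \<Rightarrow> 'v set \<Rightarrow> 'e set" where
  "in_cut E hd_of tl_of A = {e \<in> E. hd_of e \<in> A \<and> tl_of e \<notin> A}"

text \<open>The Stanley--Reisner complex of the squarefree monomial ideal C_D^q
  (generated by the squarefree monomials with supports in_cut A, for nonempty
  A \<subseteq> V - {q}): a set F of variables is a face iff the squarefree monomial
  prod_{e in F} y_e is not in the ideal, i.e. iff no generator divides it,
  i.e. iff no generator support is contained in F.\<close>
definition Sigma_Dq :: "'v set \<Rightarrow> 'e set \<Rightarrow> ('e \<Rightarrow> 'v) \<Rightarrow> ('e \<Rightarrow> 'v) \<Rightarrow> 'v \<Rightarrow> 'e set set" where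
  "Sigma_Dq V E hd_of tl_of q =
     {F. F \<subseteq> E \<and>
         (\<forall>A. A \<noteq> {} \<and> A \<subseteq> V - {q} \<longrightarrow> \<not> in_cut E hd_of tl_of A \<subseteq> F)}"

definition simplicial_complex :: "'a set set \<Rightarrow> bool" where
  "simplicial_complex K \<longleftrightarrow> finite K \<and> (\<forall>F\<in>K. finite F) \<and>
     (\<forall>F\<in>K. \<forall>G. G \<subseteq> F \<longrightarrow> G \<in> K)"

definition facets :: "'a set set \<Rightarrow> 'a set set" where
  "facets K = {F \<in> K. \<forall>G\<in>K. F \<subseteq> G \<longrightarrow> G = F}"

text \<open>A shelling is a linear order F_0,...,F_{m-1} of all facets such that for
  every j and every i < j there are k < j and x \<in> F_j - F_i with
  F_j - F_k = {x}.  (Equivalent to: for j \<ge> 1, the complex generated by F_j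
  intersected with the complex generated by F_0..F_{j-1} is pure of
  dimension dim F_j - 1.)\<close>
definition shellable :: "'a set set \<Rightarrow> bool" where
  "shellable K \<longleftrightarrow>
     (\<exists>Fs. distinct Fs \<and> set Fs = facets K \<and>
        (\<forall>j < length Fs. \<forall>i < j. \<exists>k < j. \<exists>x \<in> Fs ! j - Fs ! i.
            Fs ! j - Fs ! k = {x}))"

end

theory Submission
  imports Defs "HOL-Library.List_Lexorder" "HOL-Library.Product_Lexorder"
begin

(* A set F of arcs is a face of Sigma_D^q iff the complementary arc set E - F
   still enters every nonempty A \<subseteq> V - {q}; hence the facets are exactly the
   complements of the minimal such arc sets, which are the spanning
   arborescences rooted at q (every vertex other than q has exactly one
   incoming arc, q has none).  Shelling the complex amounts to ordering the
   arborescences so that for every earlier T_i and the current T_j there is an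
   earlier T' obtained from T_j by one arc exchange T' = T_j - {y} + {x} with
   x \<in> T_i - T_j.

   We order arborescences by the key (sum of all depths, list of parent arcs),
   compared lexicographically.  If T_i has a vertex strictly closer to q than
   in T_j, redirecting the parent arc of the closest such vertex to its T_i
   arc lowers the depth sum; if all depths agree, redirecting the vertex at
   the first position where the parent lists differ keeps the depths and
   lowers the parent list. *)


lemma shellable_by_key:
  fixes K :: "'a set set" and key :: "'a set \<Rightarrow> 'k::linorder"
  assumes fin: "finite (facets K)" and inj: "inj_on key (facets K)"
    and step: "\<And>A B. A \<in> facets K \<Longrightarrow> B \<in> facets K \<Longrightarrow> key A < key B \<Longrightarrow>
       \<exists>C\<in>facets K. key C < key B \<and> (\<exists>x\<in>B - A. B - C = {x})"
  shows "shellable K"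
proof -
  let ?S = "facets K"
  define Fs where "Fs = map (the_inv_into ?S key) (sorted_list_of_set (key ` ?S))"
  have key_inv: "key (the_inv_into ?S key y) = y" if "y \<in> key ` ?S" for y
    using inj that by (rule f_the_inv_into_f)
  have distinct: "distinct Fs" and set: "set Fs = ?S"
    unfolding Fs_def using fin inj
    by (auto simp: distinct_map inj_on_the_inv_into the_inv_into_onto)
  have sorted: "sorted_wrt (\<lambda>A B. key A < key B) Fs"
    unfolding Fs_def sorted_wrt_map using fin
    by (auto simp: key_inv intro: sorted_wrt_mono_rel[of _ "(<)"])
  have before: "k < j" if "k < length Fs" "j < length Fs" "key (Fs ! k) < key (Fs ! j)" for k j
  proof (rule ccontr)
    assume "\<not> k < j"
    then have "key (Fs ! j) \<le> key (Fs ! k)"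
      using sorted_wrt_nth_less[OF sorted, of j k] that(1,2) by (cases "j = k") auto
    then show False using that(3) by simp
  qed
  have "\<exists>k < j. \<exists>x \<in> Fs ! j - Fs ! i. Fs ! j - Fs ! k = {x}"
    if j: "j < length Fs" and ij: "i < j" for i j
  proof -
    have "Fs ! i \<in> ?S" "Fs ! j \<in> ?S" using j ij set nth_mem by (metis order.strict_trans)+
    moreover have "key (Fs ! i) < key (Fs ! j)" using sorted_wrt_nth_less[OF sorted ij j] .
    ultimately obtain C x where C: "C \<in> ?S" "key C < key (Fs ! j)" "x \<in> Fs ! j - Fs ! i"
      "Fs ! j - C = {x}"
      using step by blast
    then obtain k where "k < length Fs" "C = Fs ! k" using set by (metis in_set_conv_nth)
    then show ?thesis using C before j by blast
  qed
  then show ?thesis unfolding shellable_def using distinct set by blast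
qed


section \<open>Facets of the complex and spanning arborescences\<close>

locale rooted_digraph =
  fixes V :: "'v set" and E :: "'e set" and h t :: "'e \<Rightarrow> 'v" and q :: 'v
  assumes digraph: "loopless_multidigraph V E h t" and root: "q \<in> V"
begin

lemma finite_V: "finite V" and finite_E: "finite E"
  and head_in_V: "e \<in> E \<Longrightarrow> h e \<in> V" and tail_in_V: "e \<in> E \<Longrightarrow> t e \<in> V"
  using digraph by (auto simp: loopless_multidigraph_def)

definition spans :: "'e set \<Rightarrow> bool" where
  "spans G \<longleftrightarrow> (\<forall>A. A \<noteq> {} \<and> A \<subseteq> V - {q} \<longrightarrow> (\<exists>e\<in>G. h e \<in> A \<and> t e \<notin> A))"

definition arborescence :: "'e set \<Rightarrow> bool" where
  "arborescence G \<longleftrightarrow> G \<subseteq> E \<and> spans G \<and> inj_on h G \<and> (\<forall>e\<in>G. h e \<noteq> q)"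

lemma face_iff: "F \<in> Sigma_Dq V E h t q \<longleftrightarrow> F \<subseteq> E \<and> spans (E - F)"
  unfolding Sigma_Dq_def spans_def in_cut_def by blast

text \<open>Arborescences are minimal spanning sets: the only arc entering
  the singleton of a head is the arc itself.\<close>

lemma arborescence_minimal:
  assumes T: "arborescence G" and sub: "G' \<subseteq> G" and sp: "spans G'"
  shows "G' = G"
proof (rule ccontr)
  assume "G' \<noteq> G"
  then obtain e where e: "e \<in> G" "e \<notin> G'" using sub by blast
  then have "{h e} \<noteq> {} \<and> {h e} \<subseteq> V - {q}"
    using T head_in_V unfolding arborescence_def by auto
  then obtain e' where e': "e' \<in> G'" "h e' = h e" using sp unfolding spans_def by blast
  then have "e' = e" using T e sub unfolding arborescence_def inj_on_def by blast
  then show False using e e' by simp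
qed

text \<open>Conversely, in a minimal spanning set no arc enters the root (it could
  be dropped) and no two arcs share a head: cuts witnessing that neither of
  them can be dropped would combine into a cut entered by no arc.\<close>

lemma minimal_spanning_avoids_root:
  assumes sp: "spans G" and minimal: "\<And>G'. G' \<subseteq> G \<Longrightarrow> spans G' \<Longrightarrow> G' = G"
    and e: "e \<in> G"
  shows "h e \<noteq> q"
proof
  assume "h e = q"
  then have "spans (G - {e})" using sp unfolding spans_def by blast
  then show False using minimal[of "G - {e}"] e by blast
qed

lemma minimal_spanning_inj_heads:
  assumes sp: "spans G" and minimal: "\<And>G'. G' \<subseteq> G \<Longrightarrow> spans G' \<Longrightarrow> G' = G"
  shows "inj_on h G"
proof (rule inj_onI, rule ccontr)
  fix e1 e2 assume e: "e1 \<in> G" "e2 \<in> G" "h e1 = h e2" "e1 \<noteq> e2"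
  have cut: "\<exists>A. A \<noteq> {} \<and> A \<subseteq> V - {q} \<and> h e \<in> A \<and> t e \<notin> A \<and>
             (\<forall>f\<in>G. h f \<in> A \<and> t f \<notin> A \<longrightarrow> f = e)" if "e \<in> G" for e
  proof -
    have "\<not> spans (G - {e})" using minimal[of "G - {e}"] that by blast
    then obtain A where A: "A \<noteq> {}" "A \<subseteq> V - {q}"
      and only: "\<forall>f\<in>G - {e}. \<not> (h f \<in> A \<and> t f \<notin> A)" unfolding spans_def by blast
    moreover obtain f where "f \<in> G" "h f \<in> A" "t f \<notin> A" using sp A unfolding spans_def by blast
    ultimately show ?thesis using A by (intro exI[of _ A]) blast
  qed
  obtain A1 where A1: "A1 \<noteq> {}" "A1 \<subseteq> V - {q}" "h e1 \<in> A1" "t e1 \<notin> A1"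
      "\<forall>f\<in>G. h f \<in> A1 \<and> t f \<notin> A1 \<longrightarrow> f = e1"
    using cut[OF e(1)] by blast
  obtain A2 where A2: "A2 \<noteq> {}" "A2 \<subseteq> V - {q}" "h e2 \<in> A2" "t e2 \<notin> A2"
      "\<forall>f\<in>G. h f \<in> A2 \<and> t f \<notin> A2 \<longrightarrow> f = e2"
    using cut[OF e(2)] by blast
  have tails: "t e2 \<in> A1" "t e1 \<in> A2" using A1(3,5) A2(3,5) e by metis+
  have "A1 \<union> A2 \<noteq> {} \<and> A1 \<union> A2 \<subseteq> V - {q}" using A1 A2 by blast
  then obtain g where g: "g \<in> G" "h g \<in> A1 \<union> A2" "t g \<notin> A1 \<union> A2"
    using sp[unfolded spans_def, rule_format, of "A1 \<union> A2"] by blast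
  have "g = e1 \<or> g = e2"
  proof (cases "h g \<in> A1")
    case True
    then show ?thesis using A1(5) g by blast
  next
    case False
    then show ?thesis using A2(5) g by blast
  qed
  then show False using g tails by blast
qed

lemma minimal_spanning_arborescence:
  assumes "G \<subseteq> E" and "spans G" and "\<And>G'. G' \<subseteq> G \<Longrightarrow> spans G' \<Longrightarrow> G' = G"
  shows "arborescence G"
proof -
  have "inj_on h G" using assms(2,3) by (rule minimal_spanning_inj_heads)
  moreover have "\<forall>e\<in>G. h e \<noteq> q" using minimal_spanning_avoids_root[OF assms(2,3)] by blast
  ultimately show ?thesis using assms(1,2) unfolding arborescence_def by blast
qed

lemma facets_iff: "F \<in> facets (Sigma_Dq V E h t q) \<longleftrightarrow> F \<subseteq> E \<and> arborescence (E - F)"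
proof
  assume F: "F \<in> facets (Sigma_Dq V E h t q)"
  then have FE: "F \<subseteq> E" and sp: "spans (E - F)"
    and maximal: "\<And>F'. F' \<in> Sigma_Dq V E h t q \<Longrightarrow> F \<subseteq> F' \<Longrightarrow> F' = F"
    unfolding facets_def by (auto simp: face_iff)
  have minimal: "G' = E - F" if "G' \<subseteq> E - F" "spans G'" for G'
  proof -
    have "E - (E - G') = G'" using that by blast
    then have "E - G' \<in> Sigma_Dq V E h t q" using that by (simp add: face_iff)
    then have "E - G' = F" using maximal that FE by blast
    then show ?thesis using that by blast
  qed
  have "arborescence (E - F)" by (rule minimal_spanning_arborescence[OF Diff_subset sp minimal])
  then show "F \<subseteq> E \<and> arborescence (E - F)" using FE by blast
next
  assume F: "F \<subseteq> E \<and> arborescence (E - F)"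
  then have face: "F \<in> Sigma_Dq V E h t q" by (auto simp: face_iff arborescence_def)
  have "F' = F" if "F' \<in> Sigma_Dq V E h t q" "F \<subseteq> F'" for F'
  proof -
    have "E - F' = E - F" using arborescence_minimal[of "E - F" "E - F'"] F that
      by (auto simp: face_iff)
    then show ?thesis using F that by (auto simp: face_iff)
  qed
  then show "F \<in> facets (Sigma_Dq V E h t q)" using face unfolding facets_def by blast
qed

lemma finite_facets: "finite (facets (Sigma_Dq V E h t q))"
  by (rule finite_subset[of _ "Pow E"]) (auto simp: facets_iff finite_E)

end


section \<open>Breadth-first levels and the arc exchange\<close>

context rooted_digraph
begin

text \<open>level G n is the set of vertices reachable from q by at most n arcs of G;
  depth G v is the least such n, and parent G v the unique arc of G entering v
  (well defined in an arborescence).\<close>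

primrec level :: "'e set \<Rightarrow> nat \<Rightarrow> 'v set" where
  "level G 0 = {q}"
| "level G (Suc n) = level G n \<union> h ` {e\<in>G. t e \<in> level G n}"

definition depth :: "'e set \<Rightarrow> 'v \<Rightarrow> nat" where
  "depth G v = (LEAST n. v \<in> level G n)"

definition parent :: "'e set \<Rightarrow> 'v \<Rightarrow> 'e" where
  "parent G v = (THE e. e \<in> G \<and> h e = v)"

lemma level_mono: "m \<le> n \<Longrightarrow> level G m \<subseteq> level G n"
  by (induction n) (auto simp: le_Suc_eq)

lemma depth_le: "v \<in> level G n \<Longrightarrow> depth G v \<le> n"
  unfolding depth_def by (rule Least_le)

lemma depth_root: "depth G q = 0"
  using depth_le[of q G 0] by simp

lemma level_depth: "\<exists>n. v \<in> level G n \<Longrightarrow> v \<in> level G (depth G v)"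
  unfolding depth_def by (rule LeastI_ex)

text \<open>A set of arcs spans iff every vertex is reachable from the root along
  it: an unreachable set is entered by no arc, and a vertex of minimal depth
  in a set A avoiding q is entered from outside A by the arc reaching it.\<close>

lemma spans_iff_reaches:
  assumes GE: "G \<subseteq> E"
  shows "spans G \<longleftrightarrow> (\<forall>v\<in>V. \<exists>n. v \<in> level G n)"
proof
  assume sp: "spans G"
  show "\<forall>v\<in>V. \<exists>n. v \<in> level G n"
  proof (rule ccontr)
    assume "\<not> (\<forall>v\<in>V. \<exists>n. v \<in> level G n)"
    define U where "U = {v\<in>V. \<forall>n. v \<notin> level G n}"
    have "U \<noteq> {}" using \<open>\<not> (\<forall>v\<in>V. \<exists>n. v \<in> level G n)\<close> unfolding U_def by blast
    moreover have "q \<notin> U" unfolding U_def using level.simps(1) by blast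
    ultimately obtain e where e: "e \<in> G" "h e \<in> U" "t e \<notin> U"
      using sp[unfolded spans_def, rule_format, of U] unfolding U_def by blast
    then obtain n where "t e \<in> level G n" using GE tail_in_V unfolding U_def by blast
    then have "h e \<in> level G (Suc n)" using e(1) by auto
    then show False using e(2) unfolding U_def by blast
  qed
next
  assume reach: "\<forall>v\<in>V. \<exists>n. v \<in> level G n"
  show "spans G"
    unfolding spans_def
  proof (intro allI impI)
    fix A assume A: "A \<noteq> {} \<and> A \<subseteq> V - {q}"
    then obtain v where v: "v \<in> A" and closest: "\<And>u. u \<in> A \<Longrightarrow> depth G v \<le> depth G u"
      using ex_has_least_nat[of "\<lambda>u. u \<in> A" _ "depth G"] by blast
    have v_level: "v \<in> level G (depth G v)" using reach A v level_depth by blast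
    moreover have "v \<noteq> q" using A v by blast
    ultimately obtain m where m: "depth G v = Suc m" by (cases "depth G v") auto
    have "v \<notin> level G m" using depth_le[of v G m] m by auto
    then obtain e where e: "e \<in> G" "t e \<in> level G m" "h e = v" using v_level m by auto
    have "t e \<notin> A" using depth_le[OF e(2)] closest[of "t e"] m by auto
    then show "\<exists>e\<in>G. h e \<in> A \<and> t e \<notin> A" using e v by blast
  qed
qed

lemma arborescence_level_depth:
  assumes T: "arborescence G" and v: "v \<in> V"
  shows "v \<in> level G (depth G v)"
proof (rule level_depth)
  have "G \<subseteq> E" "spans G" using T unfolding arborescence_def by blast+
  then show "\<exists>n. v \<in> level G n" using spans_iff_reaches v by blast
qed

lemma parent_of_arc: "arborescence G \<Longrightarrow> e \<in> G \<Longrightarrow> parent G (h e) = e"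
  unfolding parent_def arborescence_def inj_on_def by (rule the_equality) auto

lemma parent_arc:
  assumes T: "arborescence G" and v: "v \<in> V" "v \<noteq> q"
  shows "parent G v \<in> G" and "h (parent G v) = v"
proof -
  have "{v} \<noteq> {} \<and> {v} \<subseteq> V - {q}" using v by auto
  then obtain e where e: "e \<in> G" "h e = v"
    using T unfolding arborescence_def spans_def by blast
  then show "parent G v \<in> G" "h (parent G v) = v" using parent_of_arc[OF T e(1)] by auto
qed

lemma arborescence_parents:
  assumes T: "arborescence G"
  shows "G = parent G ` (V - {q})"
proof
  show "parent G ` (V - {q}) \<subseteq> G" using parent_arc(1)[OF T] by blast
  show "G \<subseteq> parent G ` (V - {q})"
  proof
    fix e assume e: "e \<in> G"
    then have "h e \<in> V - {q}" using T head_in_V unfolding arborescence_def by blast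
    then show "e \<in> parent G ` (V - {q})" using parent_of_arc[OF T e] by force
  qed
qed

lemma depth_head:
  assumes T: "arborescence G" and e: "e \<in> G"
  shows "depth G (h e) = Suc (depth G (t e))"
proof -
  have eE: "e \<in> E" using T e unfolding arborescence_def by blast
  have "t e \<in> level G (depth G (t e))"
    using arborescence_level_depth[OF T tail_in_V[OF eE]] .
  then have upper: "depth G (h e) \<le> Suc (depth G (t e))" using e by (intro depth_le) auto
  have head_level: "h e \<in> level G (depth G (h e))"
    using arborescence_level_depth[OF T head_in_V[OF eE]] .
  moreover have "h e \<noteq> q" using T e unfolding arborescence_def by blast
  ultimately obtain m where m: "depth G (h e) = Suc m" by (cases "depth G (h e)") auto
  have "h e \<notin> level G m" using depth_le[of "h e" G m] m by auto
  then obtain e' where e': "e' \<in> G" "t e' \<in> level G m" "h e' = h e" using head_level m by auto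
  then have "e' = e" using T e unfolding arborescence_def inj_on_def by blast
  then have "depth G (t e) \<le> m" using e' depth_le by blast
  then show ?thesis using upper m by simp
qed

definition exchange :: "'e set \<Rightarrow> 'e \<Rightarrow> 'e set" where
  "exchange G x = insert x (G - {parent G (h x)})"

lemma exchange_levels:
  assumes T: "arborescence G" and x: "x \<in> E" "h x \<noteq> q"
    and closer: "depth G (t x) < depth G (h x)" and v: "v \<in> V"
  shows "v \<in> level (exchange G x) (depth G v)"
proof -
  have "\<forall>v\<in>V. depth G v = n \<longrightarrow> v \<in> level (exchange G x) n" for n
  proof (induction n rule: less_induct)
    case (less n)
    show ?case
    proof (intro ballI impI)
      fix v assume v: "v \<in> V" "depth G v = n"
      show "v \<in> level (exchange G x) n"
      proof (cases "v = q")
        case True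
        then show ?thesis using level_mono[of 0 n] by auto
      next
        case False
        define e where "e = parent G v"
        have e: "e \<in> G" "h e = v" using parent_arc[OF T v(1) False] e_def by auto
        then obtain m where m: "n = Suc m" "depth G (t e) = m"
          using depth_head[OF T e(1)] v(2) by auto
        show ?thesis
        proof (cases "v = h x")
          case True
          have "t x \<in> level (exchange G x) (depth G (t x))"
            using less.IH closer True v(2) tail_in_V[OF x(1)] by blast
          moreover have "depth G (t x) \<le> m" using closer True v(2) m(1) by simp
          ultimately have "t x \<in> level (exchange G x) m" using level_mono by blast
          then show ?thesis using True m(1) unfolding exchange_def by auto
        next
          case False
          then have "e \<noteq> parent G (h x)"
            using e parent_arc(2)[OF T head_in_V[OF x(1)] x(2)] by metis
          then have "e \<in> exchange G x" using e(1) unfolding exchange_def by blast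
          moreover have "t e \<in> level (exchange G x) m"
            using less.IH m tail_in_V e(1) T unfolding arborescence_def by blast
          ultimately show ?thesis using e(2) m(1) by auto
        qed
      qed
    qed
  qed
  then show ?thesis using v by blast
qed

lemma exchange_arborescence:
  assumes T: "arborescence G" and x: "x \<in> E" "h x \<noteq> q"
    and closer: "depth G (t x) < depth G (h x)"
  shows "arborescence (exchange G x)"
proof -
  have GE: "G \<subseteq> E" and inj: "inj_on h G" and avoids: "\<forall>e\<in>G. h e \<noteq> q"
    using T unfolding arborescence_def by blast+
  have sub: "exchange G x \<subseteq> E" using GE x(1) unfolding exchange_def by blast
  have "spans (exchange G x)"
    using exchange_levels[OF T x closer] spans_iff_reaches[OF sub] by blast
  moreover have "h x \<notin> h ` (G - {parent G (h x)})"
    using parent_of_arc[OF T] by force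
  then have "inj_on h (exchange G x)"
    unfolding exchange_def using inj by (auto simp: inj_on_diff)
  moreover have "\<forall>e\<in>exchange G x. h e \<noteq> q" using avoids x(2) unfolding exchange_def by blast
  ultimately show ?thesis using sub unfolding arborescence_def by blast
qed

lemma exchange_depth_le:
  assumes "arborescence G" "x \<in> E" "h x \<noteq> q" "depth G (t x) < depth G (h x)" "v \<in> V"
  shows "depth (exchange G x) v \<le> depth G v"
  using exchange_levels[OF assms] by (rule depth_le)

lemma exchange_depth_head:
  assumes "arborescence G" "x \<in> E" "h x \<noteq> q" "depth G (t x) < depth G (h x)"
  shows "depth (exchange G x) (h x) \<le> Suc (depth G (t x))"
proof (rule depth_le)
  have "t x \<in> level (exchange G x) (depth G (t x))"
    using exchange_levels[OF assms tail_in_V[OF assms(2)]] .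
  then show "h x \<in> level (exchange G x) (Suc (depth G (t x)))" unfolding exchange_def by auto
qed

lemma exchange_parent:
  assumes T: "arborescence G" and x: "x \<in> E" "h x \<noteq> q"
    and closer: "depth G (t x) < depth G (h x)" and u: "u \<in> V" "u \<noteq> q"
  shows "parent (exchange G x) u = (if u = h x then x else parent G u)"
proof -
  have T': "arborescence (exchange G x)" using exchange_arborescence[OF T x closer] .
  show ?thesis
  proof (cases "u = h x")
    case True
    then show ?thesis using parent_of_arc[OF T', of x] unfolding exchange_def by simp
  next
    case False
    have e: "parent G u \<in> G" "h (parent G u) = u" using parent_arc[OF T u] by auto
    then have "parent G u \<noteq> parent G (h x)"
      using False parent_arc(2)[OF T head_in_V[OF x(1)] x(2)] by metis
    then have "parent G u \<in> exchange G x" using e(1) unfolding exchange_def by blast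
    then show ?thesis using parent_of_arc[OF T'] e(2) False by metis
  qed
qed

end


section \<open>The shelling order on arborescences\<close>

lemma list_less_position:
  fixes xs ys :: "'a::linorder list"
  assumes "xs < ys" and "length xs = length ys"
  shows "\<exists>p < length xs. xs ! p < ys ! p"
  using assms unfolding list_less_def lexord_take_index_conv by auto

lemma list_update_less:
  fixes xs :: "'a::linorder list"
  assumes "p < length xs" and "a < xs ! p"
  shows "xs[p := a] < xs"
  unfolding list_less_def lexord_take_index_conv using assms
  by (intro disjI2 exI[of _ p]) simp

locale ordered_rooted_digraph = rooted_digraph V E h t q
  for V :: "'v set" and E :: "'e set" and h t :: "'e \<Rightarrow> 'v" and q :: 'v +
  fixes vs :: "'v list" and idx :: "'e \<Rightarrow> nat"
  assumes vs_distinct: "distinct vs" and vs_set: "set vs = V - {q}"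
    and idx_inj: "inj_on idx E"
begin

definition depth_sum :: "'e set \<Rightarrow> nat" where
  "depth_sum G = (\<Sum>v\<in>V. depth G v)"

definition parent_code :: "'e set \<Rightarrow> nat list" where
  "parent_code G = map (\<lambda>v. idx (parent G v)) vs"

definition key :: "'e set \<Rightarrow> nat \<times> nat list" where
  "key G = (depth_sum G, parent_code G)"

lemma parent_code_inj:
  assumes T1: "arborescence G1" and T2: "arborescence G2"
    and eq: "parent_code G1 = parent_code G2"
  shows "G1 = G2"
proof -
  have "parent G1 v = parent G2 v" if v: "v \<in> V - {q}" for v
  proof -
    have "idx (parent G1 v) = idx (parent G2 v)" using eq v vs_set unfolding parent_code_def by simp
    moreover have "parent G1 v \<in> E" "parent G2 v \<in> E"
      using parent_arc(1)[OF T1] parent_arc(1)[OF T2] v T1 T2 unfolding arborescence_def by auto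
    ultimately show ?thesis using idx_inj by (simp add: inj_on_eq_iff)
  qed
  then show ?thesis
    using arborescence_parents[OF T1] arborescence_parents[OF T2] by (metis image_cong)
qed

lemma parent_code_exchange:
  assumes T: "arborescence G" and x: "x \<in> E" "h x \<noteq> q"
    and closer: "depth G (t x) < depth G (h x)"
    and p: "p < length vs" "vs ! p = h x"
  shows "parent_code (exchange G x) = (parent_code G)[p := idx x]"
proof (rule nth_equalityI)
  show "length (parent_code (exchange G x)) = length ((parent_code G)[p := idx x])"
    unfolding parent_code_def by simp
next
  fix i assume "i < length (parent_code (exchange G x))"
  then have i: "i < length vs" unfolding parent_code_def by simp
  then have "vs ! i \<in> V" "vs ! i \<noteq> q" using vs_set nth_mem by fastforce+
  moreover have "vs ! i = h x \<longleftrightarrow> i = p" using p i vs_distinct nth_eq_iff_index_eq by metis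
  ultimately show "parent_code (exchange G x) ! i = (parent_code G)[p := idx x] ! i"
    using exchange_parent[OF T x closer] i p unfolding parent_code_def by auto
qed

text \<open>First case of the exchange step: if Gi has a vertex closer to the root
  than in Gj, take the nearest such vertex w.  Its parent arc x in Gi starts at
  a vertex no deeper in Gj than in Gi, so x is not in Gj, and installing x in
  Gj makes w strictly closer without moving any vertex away.\<close>

lemma improve_where_closer:
  assumes Ti: "arborescence Gi" and Tj: "arborescence Gj"
    and closer: "\<exists>v\<in>V. depth Gi v < depth Gj v"
  shows "\<exists>x\<in>Gi - Gj. arborescence (exchange Gj x) \<and> key (exchange Gj x) < key Gj"
proof -
  obtain w where w: "w \<in> V" "depth Gi w < depth Gj w"
    and nearest: "\<And>v. v \<in> V \<Longrightarrow> depth Gi v < depth Gj v \<Longrightarrow> depth Gi w \<le> depth Gi v"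
    using closer ex_has_least_nat[of "\<lambda>v. v \<in> V \<and> depth Gi v < depth Gj v" _ "depth Gi"]
    by blast
  have "w \<noteq> q" using w(2) depth_root by (metis not_less0)
  define x where "x = parent Gi w"
  have x: "x \<in> Gi" "h x = w" using parent_arc[OF Ti w(1) \<open>w \<noteq> q\<close>] x_def by auto
  have xE: "x \<in> E" using Ti x(1) unfolding arborescence_def by blast
  have hx: "h x \<noteq> q" using x(2) \<open>w \<noteq> q\<close> by simp
  have depth_w: "depth Gi w = Suc (depth Gi (t x))" using depth_head[OF Ti x(1)] x(2) by simp
  have tail: "depth Gj (t x) \<le> depth Gi (t x)"
    using nearest[OF tail_in_V[OF xE]] depth_w by fastforce
  then have closer_x: "depth Gj (t x) < depth Gj (h x)" using depth_w w(2) x(2) by simp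
  have "x \<notin> Gj"
  proof
    assume "x \<in> Gj"
    then have "depth Gj w = Suc (depth Gj (t x))" using depth_head[OF Tj] x(2) by metis
    then show False using tail depth_w w(2) by simp
  qed
  have "depth (exchange Gj x) w < depth Gj w"
    using exchange_depth_head[OF Tj xE hx closer_x] tail depth_w w(2) x(2) by simp
  moreover have "\<forall>v\<in>V. depth (exchange Gj x) v \<le> depth Gj v"
    using exchange_depth_le[OF Tj xE hx closer_x] by blast
  ultimately have "depth_sum (exchange Gj x) < depth_sum Gj"
    unfolding depth_sum_def using w(1) finite_V by (intro sum_strict_mono_ex1) auto
  then have "key (exchange Gj x) < key Gj" by (simp add: key_def less_prod_def)
  then show ?thesis using exchange_arborescence[OF Tj xE hx closer_x] x(1) \<open>x \<notin> Gj\<close> by blast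
qed

text \<open>Second case: all depths agree and the parent lists differ first at a
  vertex v where Gi uses an arc x of smaller number.  Since x enters v from a
  vertex one level up, installing x in Gj keeps all depths and lowers the
  parent list exactly at v.\<close>

lemma improve_at_equal_depths:
  assumes Ti: "arborescence Gi" and Tj: "arborescence Gj"
    and same: "\<forall>v\<in>V. depth Gi v = depth Gj v" and less: "parent_code Gi < parent_code Gj"
  shows "\<exists>x\<in>Gi - Gj. arborescence (exchange Gj x) \<and> key (exchange Gj x) < key Gj"
proof -
  obtain p where p: "p < length vs" "idx (parent Gi (vs ! p)) < idx (parent Gj (vs ! p))"
    using list_less_position[OF less] unfolding parent_code_def by auto
  define v where "v = vs ! p"
  have v: "v \<in> V" "v \<noteq> q" using p(1) vs_set nth_mem unfolding v_def by fastforce+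
  define x where "x = parent Gi v"
  have x: "x \<in> Gi" "h x = v" using parent_arc[OF Ti v] x_def by auto
  have xE: "x \<in> E" using Ti x(1) unfolding arborescence_def by blast
  have hx: "h x \<noteq> q" using x(2) v(2) by simp
  have "x \<notin> Gj"
  proof
    assume "x \<in> Gj"
    then have "parent Gj v = x" using parent_of_arc[OF Tj] x(2) by metis
    then show False using p(2) x_def v_def by simp
  qed
  have closer_x: "depth Gj (t x) < depth Gj (h x)"
    using depth_head[OF Ti x(1)] same tail_in_V[OF xE] v(1) x(2) by simp
  have "depth_sum (exchange Gj x) \<le> depth_sum Gj"
    unfolding depth_sum_def using exchange_depth_le[OF Tj xE hx closer_x] by (intro sum_mono)
  moreover have "parent_code (exchange Gj x) < parent_code Gj"
  proof -
    have code: "parent_code (exchange Gj x) = (parent_code Gj)[p := idx x]"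
      using parent_code_exchange[OF Tj xE hx closer_x p(1)] x(2) v_def by simp
    have "p < length (parent_code Gj)" using p(1) unfolding parent_code_def by simp
    moreover have "idx x < parent_code Gj ! p"
      using p x_def v_def unfolding parent_code_def by simp
    ultimately show ?thesis unfolding code by (rule list_update_less)
  qed
  ultimately have "key (exchange Gj x) < key Gj" by (simp add: key_def less_prod_def)
  then show ?thesis using exchange_arborescence[OF Tj xE hx closer_x] x(1) \<open>x \<notin> Gj\<close> by blast
qed

lemma key_improvement:
  assumes Ti: "arborescence Gi" and Tj: "arborescence Gj" and less: "key Gi < key Gj"
  shows "\<exists>x\<in>Gi - Gj. arborescence (exchange Gj x) \<and> key (exchange Gj x) < key Gj"
proof (cases "\<exists>v\<in>V. depth Gi v < depth Gj v")
  case True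
  then show ?thesis using improve_where_closer[OF Ti Tj] by blast
next
  case False
  then have deeper: "\<forall>v\<in>V. depth Gj v \<le> depth Gi v" by (auto simp: not_less)
  have sum_le: "depth_sum Gi \<le> depth_sum Gj" using less by (auto simp: key_def less_prod_def)
  have same: "\<forall>v\<in>V. depth Gi v = depth Gj v"
  proof (rule ccontr)
    assume "\<not> (\<forall>v\<in>V. depth Gi v = depth Gj v)"
    then obtain v where "v \<in> V" "depth Gj v < depth Gi v" using deeper le_neq_implies_less by metis
    then have "depth_sum Gj < depth_sum Gi"
      unfolding depth_sum_def using deeper finite_V by (intro sum_strict_mono_ex1) auto
    then show False using sum_le by simp
  qed
  then have "depth_sum Gi = depth_sum Gj" unfolding depth_sum_def by (intro sum.cong) auto
  then have "parent_code Gi < parent_code Gj" using less by (simp add: key_def less_prod_def)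
  then show ?thesis using improve_at_equal_depths[OF Ti Tj same] by blast
qed

lemma key_inj_on_facets: "inj_on (\<lambda>F. key (E - F)) (facets (Sigma_Dq V E h t q))"
proof (rule inj_onI)
  fix A B
  assume A: "A \<in> facets (Sigma_Dq V E h t q)" and B: "B \<in> facets (Sigma_Dq V E h t q)"
    and eq: "key (E - A) = key (E - B)"
  have "E - A = E - B"
    using parent_code_inj eq A B by (auto simp: facets_iff key_def)
  then show "A = B" using A B by (auto simp: facets_iff)
qed

lemma facet_exchange:
  assumes A: "A \<in> facets (Sigma_Dq V E h t q)" and B: "B \<in> facets (Sigma_Dq V E h t q)"
    and less: "key (E - A) < key (E - B)"
  shows "\<exists>C\<in>facets (Sigma_Dq V E h t q). key (E - C) < key (E - B) \<and> (\<exists>x\<in>B - A. B - C = {x})"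
proof -
  have TA: "arborescence (E - A)" and TB: "arborescence (E - B)" and BE: "B \<subseteq> E"
    using A B by (auto simp: facets_iff)
  obtain x where x: "x \<in> (E - A) - (E - B)" and T': "arborescence (exchange (E - B) x)"
    and key': "key (exchange (E - B) x) < key (E - B)"
    using key_improvement[OF TA TB less] by blast
  define C where "C = E - exchange (E - B) x"
  have sub: "exchange (E - B) x \<subseteq> E" using T' unfolding arborescence_def by blast
  then have "E - C = exchange (E - B) x" unfolding C_def by blast
  then have "C \<in> facets (Sigma_Dq V E h t q)" "key (E - C) < key (E - B)"
    using T' key' by (auto simp: facets_iff C_def)
  moreover have "B - C = {x}" using x sub BE unfolding C_def exchange_def by blast
  ultimately show ?thesis using x by blast
qed

lemma shellable_Sigma: "shellable (Sigma_Dq V E h t q)"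
  by (rule shellable_by_key[OF finite_facets key_inj_on_facets facet_exchange])

end


theorem mainTheorem6:
  fixes V :: "'v set" and E :: "'e set" and hd_of tl_of :: "'e \<Rightarrow> 'v" and q :: 'v
  assumes "loopless_multidigraph V E hd_of tl_of"
    and "q \<in> V"
    and "\<forall>v\<in>V. reachable E hd_of tl_of q v"
  shows "shellable (Sigma_Dq V E hd_of tl_of q)"
proof -
  interpret rooted_digraph V E hd_of tl_of q using assms(1,2) by unfold_locales
  obtain vs where "distinct vs" "set vs = V - {q}"
    using finite_distinct_list[of "V - {q}"] finite_V by blast
  moreover obtain idx :: "'e \<Rightarrow> nat" where "inj_on idx E"
    using finite_imp_inj_to_nat_seg[OF finite_E] by blast
  ultimately interpret ordered_rooted_digraph V E hd_of tl_of q vs idx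
    by unfold_locales
  show ?thesis by (rule shellable_Sigma)
qed

end
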